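(* Let $T_1\subseteq\mathbb{R}^3$ be the closed triangle with vertices $(0,0,0),(0,-1,0),(-1,-1,0)$ and $T_2$ the closed triangle with vertices $(0,0,0),(-1,-1,0),(-1,-1,-1)$. Let $Y=T_1\cup T_2$ with the relative Euclidean topology $\tau$ and the coordinatewise partial order $\preceq$. Then: (i) $(Y,\tau,\preceq)$ is a locally compact, order-connected partially ordered topological space and $(Y,\preceq)$ is a lattice; (ii) the meet operation $\wedge:Y\times Y\to Y$ is not continuous at $((0,0,0),(0,-1,0))$, so $(Y,\tau,\preceq)$ is not a topological $\wedge$-semilattice; (iii) the canonical map $y\mapsto y^\downarrow$ from $(Y,\tau)$ to $(C^\downarrow(Y),\tau_F)$ is not continuous at $(0,0,0)$.
   Context: A partially ordered topological space is a topological space with a partial order whose graph is closed in the product. $y^\downarrow=\{u\in Y:u\preceq y\}$, $y^\uparrow=\{u\in Y:y\preceq u\}$. Order-connected: $x^\uparrow\cap y^\downarrow$ is connected whenever $x\preceq y$. A topological $\wedge$-semilattice is a partially ordered topological space in which every two elements have an infimum and $\wedge$ is continuous. $C(Y)$ = closed subsets of $Y$, $C^\downarrow(Y)=\{y^\downarrow:y\in Y\}$ with the relative Fell topology; the Fell topology $\tau_F$ is generated by the sets $\{A:A\cap O\neq\emptyset\}$ ($O$ open) and $\{A:A\cap D=\emptyset\}$ ($D$ compact). *)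

theory Defs
  imports "HOL-Analysis.Analysis"
begin

text \<open>Points of R^3 are of type real^3; the order on real^3 is the library's
coordinatewise order (less_eq_vec_def).\<close>

definition T1 :: "(real^3) set" where
  "T1 = convex hull {vector [0,0,0], vector [0,-1,0], vector [-1,-1,0]}"

definition T2 :: "(real^3) set" where
  "T2 = convex hull {vector [0,0,0], vector [-1,-1,0], vector [-1,-1,-1]}"

definition Yset :: "(real^3) set" where
  "Yset = T1 \<union> T2"

definition pospace :: "('a::{topological_space,order}) set \<Rightarrow> bool" where
  "pospace Y \<longleftrightarrow>
     closedin (prod_topology (top_of_set Y) (top_of_set Y)) {(x,y). x \<in> Y \<and> y \<in> Y \<and> x \<le> y}"

definition downset :: "('a::order) set \<Rightarrow> 'a \<Rightarrow> 'a set" where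
  "downset Y y = {u \<in> Y. u \<le> y}"

definition upset :: "('a::order) set \<Rightarrow> 'a \<Rightarrow> 'a set" where
  "upset Y y = {u \<in> Y. y \<le> u}"

definition order_connected :: "('a::{topological_space,order}) set \<Rightarrow> bool" where
  "order_connected Y \<longleftrightarrow>
     (\<forall>x\<in>Y. \<forall>y\<in>Y. x \<le> y \<longrightarrow> connected (upset Y x \<inter> downset Y y))"

definition is_inf_in :: "('a::order) set \<Rightarrow> 'a \<Rightarrow> 'a \<Rightarrow> 'a \<Rightarrow> bool" where
  "is_inf_in Y x y z \<longleftrightarrow> z \<in> Y \<and> z \<le> x \<and> z \<le> y \<and> (\<forall>w\<in>Y. w \<le> x \<and> w \<le> y \<longrightarrow> w \<le> z)"

definition is_sup_in :: "('a::order) set \<Rightarrow> 'a \<Rightarrow> 'a \<Rightarrow> 'a \<Rightarrow> bool" where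
  "is_sup_in Y x y z \<longleftrightarrow> z \<in> Y \<and> x \<le> z \<and> y \<le> z \<and> (\<forall>w\<in>Y. x \<le> w \<and> y \<le> w \<longrightarrow> z \<le> w)"

definition is_lattice_on :: "('a::order) set \<Rightarrow> bool" where
  "is_lattice_on Y \<longleftrightarrow>
     (\<forall>x\<in>Y. \<forall>y\<in>Y. (\<exists>z. is_inf_in Y x y z) \<and> (\<exists>z. is_sup_in Y x y z))"

definition meet_in :: "('a::order) set \<Rightarrow> 'a \<Rightarrow> 'a \<Rightarrow> 'a" where
  "meet_in Y x y = (THE z. is_inf_in Y x y z)"

definition top_meet_semilattice :: "('a::{topological_space,order}) set \<Rightarrow> bool" where
  "top_meet_semilattice Y \<longleftrightarrow> pospace Y \<and>
     (\<forall>x\<in>Y. \<forall>y\<in>Y. \<exists>z. is_inf_in Y x y z) \<and>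
     continuous_map (prod_topology (top_of_set Y) (top_of_set Y)) (top_of_set Y)
        (\<lambda>(x,y). meet_in Y x y)"

definition closed_subsets :: "('a::topological_space) set \<Rightarrow> 'a set set" where
  "closed_subsets Y = {A. closedin (top_of_set Y) A}"

definition fell_topology :: "('a::topological_space) set \<Rightarrow> 'a set topology" where
  "fell_topology Y = topology_generated_by
     ({{A \<in> closed_subsets Y. A \<inter> U \<noteq> {}} | U. openin (top_of_set Y) U} \<union>
      {{A \<in> closed_subsets Y. A \<inter> D = {}} | D. compactin (top_of_set Y) D})"

definition down_sets :: "('a::order) set \<Rightarrow> 'a set set" where
  "down_sets Y = downset Y ` Y"

definition continuous_at_point :: "'a topology \<Rightarrow> 'b topology \<Rightarrow> ('a \<Rightarrow> 'b) \<Rightarrow> 'a \<Rightarrow> bool" where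
  "continuous_at_point X X' f x \<longleftrightarrow>
     (\<forall>U. openin X' U \<and> f x \<in> U \<longrightarrow> (\<exists>V. openin X V \<and> x \<in> V \<and> f ` V \<subseteq> U))"

end

theory Submission
  imports Defs
begin

text \<open>Every
point of Y off the plane u3 = 0 lies in T2, hence on the plane u1 = u2, and so do all
its lower bounds. Along the diagonal points d(-1,-1,-1), d \<rightarrow> 0+, this forces the meet
with e = (0,-1,0) to be (-1,-1,-d), which does not tend to e, the meet of 0 and e; and it
keeps the down-sets of these points away from e, whereas the down-set of 0 is all of Y,
so the hit-set of a small neighbourhood of e witnesses discontinuity for the Fell
topology.\<close>

lemma meet_in_eqI:
  assumes "is_inf_in Y x y z"
  shows "meet_in Y x y = (z :: 'a::order)"
  unfolding meet_in_def
proof (rule the_equality)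
  show "is_inf_in Y x y z" by fact
  fix z' assume "is_inf_in Y x y z'"
  with assms show "z' = z" unfolding is_inf_in_def by (blast intro: antisym)
qed

lemma T1_coordinates: "T1 = {u. u$3 = 0 \<and> -1 \<le> u$2 \<and> u$2 \<le> u$1 \<and> u$1 \<le> 0}"
proof (rule set_eqI, rule iffI)
  fix u assume "u \<in> T1"
  then obtain a b c where "0 \<le> a" "0 \<le> b" "0 \<le> c" "a + b + c = 1"
    "u = a *\<^sub>R vector [0,0,0] + b *\<^sub>R vector [0,-1,0] + c *\<^sub>R vector [-1,-1,0]"
    unfolding T1_def convex_hull_3 by blast
  then show "u \<in> {u. u$3 = 0 \<and> -1 \<le> u$2 \<and> u$2 \<le> u$1 \<and> u$1 \<le> 0}" by auto
next
  fix u :: "real^3" assume u: "u \<in> {u. u$3 = 0 \<and> -1 \<le> u$2 \<and> u$2 \<le> u$1 \<and> u$1 \<le> 0}"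
  have "u = (1 + u$2) *\<^sub>R vector [0,0,0] + (u$1 - u$2) *\<^sub>R vector [0,-1,0]
            + (- u$1) *\<^sub>R vector [-1,-1,0]"
    using u by (simp add: vec_eq_iff forall_3)
  moreover have "0 \<le> 1 + u$2" "0 \<le> u$1 - u$2" "0 \<le> - u$1"
    "(1 + u$2) + (u$1 - u$2) + (- u$1) = 1" using u by auto
  ultimately show "u \<in> T1" unfolding T1_def convex_hull_3 by blast
qed

lemma T2_coordinates: "T2 = {u. u$1 = u$2 \<and> -1 \<le> u$1 \<and> u$1 \<le> u$3 \<and> u$3 \<le> 0}"
proof (rule set_eqI, rule iffI)
  fix u assume "u \<in> T2"
  then obtain a b c where "0 \<le> a" "0 \<le> b" "0 \<le> c" "a + b + c = 1"
    "u = a *\<^sub>R vector [0,0,0] + b *\<^sub>R vector [-1,-1,0] + c *\<^sub>R vector [-1,-1,-1]"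
    unfolding T2_def convex_hull_3 by blast
  then show "u \<in> {u. u$1 = u$2 \<and> -1 \<le> u$1 \<and> u$1 \<le> u$3 \<and> u$3 \<le> 0}" by auto
next
  fix u :: "real^3" assume u: "u \<in> {u. u$1 = u$2 \<and> -1 \<le> u$1 \<and> u$1 \<le> u$3 \<and> u$3 \<le> 0}"
  have "u = (1 + u$1) *\<^sub>R vector [0,0,0] + (u$3 - u$1) *\<^sub>R vector [-1,-1,0]
            + (- u$3) *\<^sub>R vector [-1,-1,-1]"
    using u by (simp add: vec_eq_iff forall_3)
  moreover have "0 \<le> 1 + u$1" "0 \<le> u$3 - u$1" "0 \<le> - u$3"
    "(1 + u$1) + (u$3 - u$1) + (- u$3) = 1" using u by auto
  ultimately show "u \<in> T2" unfolding T2_def convex_hull_3 by blast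
qed

lemma mem_Yset_iff:
  "u \<in> Yset \<longleftrightarrow> -1 \<le> u$2 \<and> u$2 \<le> u$1 \<and> u$1 \<le> 0 \<and> u$3 \<le> 0 \<and> (u$3 = 0 \<or> (u$1 = u$2 \<and> u$1 \<le> u$3))"
  unfolding Yset_def T1_coordinates T2_coordinates by auto

lemma less_eq_vec3_iff: "(u::real^3) \<le> v \<longleftrightarrow> u$1 \<le> v$1 \<and> u$2 \<le> v$2 \<and> u$3 \<le> v$3"
  by (simp add: less_eq_vec_def forall_3)

lemma vector_zero_3: "vector [0,0,0] = (0::real^3)"
  by (simp add: vec_eq_iff forall_3)

lemma downset_Yset_zero: "downset Yset (vector [0,0,0]) = Yset"
  by (auto simp: downset_def mem_Yset_iff less_eq_vec3_iff)

lemma zero_mem_Yset: "vector [0,0,0] \<in> Yset"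
  unfolding mem_Yset_iff by simp

lemma e_mem_Yset: "vector [0,-1,0] \<in> Yset"
  unfolding mem_Yset_iff by simp

lemma diagonal_mem_Yset:
  assumes "0 \<le> d" "d \<le> 1"
  shows "d *\<^sub>R vector [-1,-1,-1] \<in> Yset"
  using assms unfolding mem_Yset_iff by simp

lemma tendsto_diagonal_zero: "((\<lambda>d. d *\<^sub>R vector [-1,-1,-1]) \<longlongrightarrow> (vector [0,0,0] :: real^3)) (at_right 0)"
proof -
  have "((\<lambda>d::real. d *\<^sub>R (vector [-1,-1,-1] :: real^3)) \<longlongrightarrow> 0 *\<^sub>R vector [-1,-1,-1]) (at_right 0)"
    by (intro tendsto_intros)
  then show ?thesis by (simp add: vector_zero_3)
qed

lemma eventually_at_right_zero_unit: "eventually (\<lambda>d::real. 0 < d \<and> d \<le> 1) (at_right 0)"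
  by (rule eventually_mono[OF eventually_at_right_real[of 0 1]]) auto

lemma locally_compact_Yset: "locally_compact_space (top_of_set Yset)"
proof -
  have "compact Yset"
    unfolding Yset_def T1_def T2_def by (intro compact_Un compact_convex_hull) auto
  then show ?thesis
    by (intro compact_imp_locally_compact_space compact_space_subtopology) simp
qed

lemma closed_vec_le_graph: "closed {p :: (real^'n) \<times> (real^'n). fst p \<le> snd p}"
proof -
  have "{p :: (real^'n) \<times> (real^'n). fst p \<le> snd p} = (\<Inter>i. {p. fst p $ i \<le> snd p $ i})"
    by (auto simp: less_eq_vec_def)
  moreover have "closed (\<Inter>i. {p :: (real^'n) \<times> (real^'n). fst p $ i \<le> snd p $ i})"
    by (intro closed_INT ballI closed_Collect_le continuous_intros)
  ultimately show ?thesis by simp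
qed

lemma pospace_vec: "pospace (Y :: (real^'n) set)"
proof -
  have "{(x,y). x \<in> Y \<and> y \<in> Y \<and> x \<le> y} = (Y \<times> Y) \<inter> {p. fst p \<le> snd p}" by auto
  then show ?thesis
    unfolding pospace_def prod_topology_subtopology_eu
    using closedin_closed_Int[OF closed_vec_le_graph, of "Y \<times> Y"] by simp
qed

lemma order_connected_Un_convex:
  fixes A B :: "(real^'n) set"
  assumes "convex A" "convex B"
    and meet: "\<And>x y. x \<le> y \<Longrightarrow> A \<inter> {x..y} \<noteq> {} \<Longrightarrow> B \<inter> {x..y} \<noteq> {} \<Longrightarrow> A \<inter> B \<inter> {x..y} \<noteq> {}"
  shows "order_connected (A \<union> B)"
  unfolding order_connected_def
proof (intro ballI impI)
  fix x y :: "real^'n" assume "x \<le> y"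
  have eq: "upset (A \<union> B) x \<inter> downset (A \<union> B) y = (A \<inter> {x..y}) \<union> (B \<inter> {x..y})"
    unfolding upset_def downset_def by auto
  have "convex {x..y}" unfolding interval_cbox_cart by (rule convex_box)
  then have "connected (A \<inter> {x..y})" "connected (B \<inter> {x..y})"
    using assms(1,2) by (simp_all add: convex_connected convex_Int)
  moreover have "A \<inter> {x..y} = {} \<or> B \<inter> {x..y} = {} \<or> A \<inter> {x..y} \<inter> (B \<inter> {x..y}) \<noteq> {}"
    using meet[OF \<open>x \<le> y\<close>] by blast
  ultimately show "connected (upset (A \<union> B) x \<inter> downset (A \<union> B) y)"
    unfolding eq using connected_Un by fastforce
qed

lemma order_connected_Yset: "order_connected Yset"
  unfolding Yset_def
proof (rule order_connected_Un_convex)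
  show "convex T1" "convex T2" unfolding T1_def T2_def by (rule convex_convex_hull)+
  fix x y :: "real^3"
  assume "T1 \<inter> {x..y} \<noteq> {}" "T2 \<inter> {x..y} \<noteq> {}"
  then obtain p q where "p \<in> T1 \<inter> {x..y}" "q \<in> T2 \<inter> {x..y}" by blast
  \<comment> \<open>(q1,q1,0) is on the common edge; its third coordinate is that of p, the others are q's\<close>
  then have "vector [q$1, q$1, 0] \<in> T1 \<inter> T2 \<inter> {x..y}"
    unfolding T1_coordinates T2_coordinates by (auto simp: less_eq_vec3_iff)
  then show "T1 \<inter> T2 \<inter> {x..y} \<noteq> {}" by blast
qed

text \<open>Within the plane u3 = 0 the meet is coordinatewise; otherwise every lower bound
has negative third coordinate, hence lies on the plane u1 = u2 (see T2_coordinates).\<close>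

definition meet_Yset :: "real^3 \<Rightarrow> real^3 \<Rightarrow> real^3" where
  "meet_Yset p q =
    (if p$3 = 0 \<and> q$3 = 0 then vector [min (p$1) (q$1), min (p$2) (q$2), 0]
     else let m = min (min (p$1) (q$1)) (min (p$2) (q$2)) in vector [m, m, min (p$3) (q$3)])"

lemma is_inf_in_Yset:
  assumes p: "p \<in> Yset" and q: "q \<in> Yset"
  shows "is_inf_in Yset p q (meet_Yset p q)"
proof (cases "p$3 = 0 \<and> q$3 = 0")
  case True
  let ?z = "vector [min (p$1) (q$1), min (p$2) (q$2), 0] :: real^3"
  have "meet_Yset p q = ?z" using True by (simp add: meet_Yset_def)
  moreover have "?z \<in> Yset" "?z \<le> p" "?z \<le> q"
    using p q True unfolding mem_Yset_iff less_eq_vec3_iff by auto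
  moreover have "w \<le> ?z" if "w \<in> Yset" "w \<le> p" "w \<le> q" for w
    using that unfolding mem_Yset_iff less_eq_vec3_iff by simp
  ultimately show ?thesis unfolding is_inf_in_def by auto
next
  case False
  define m where "m = min (min (p$1) (q$1)) (min (p$2) (q$2))"
  let ?z = "vector [m, m, min (p$3) (q$3)] :: real^3"
  have "meet_Yset p q = ?z"
    using False unfolding meet_Yset_def m_def Let_def by (simp only: if_False)
  moreover have m: "-1 \<le> m" "m \<le> p$1" "m \<le> q$1" "m \<le> p$2" "m \<le> q$2" "m \<le> p$3" "m \<le> q$3"
    using p q unfolding mem_Yset_iff m_def by auto
  moreover have "min (p$3) (q$3) < 0" using p q False unfolding mem_Yset_iff by auto
  then have "?z \<in> Yset" using m unfolding mem_Yset_iff by simp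
  moreover have "w \<le> ?z" if w: "w \<in> Yset" "w \<le> p" "w \<le> q" for w
  proof -
    have "w$3 < 0" using w \<open>min (p$3) (q$3) < 0\<close> unfolding less_eq_vec3_iff by auto
    then have "w$1 = w$2" using w(1) unfolding mem_Yset_iff by auto
    then show ?thesis using w unfolding less_eq_vec3_iff m_def by auto
  qed
  ultimately show ?thesis using m unfolding is_inf_in_def by (auto simp: less_eq_vec3_iff)
qed

lemma is_sup_in_Yset:
  assumes p: "p \<in> Yset" and q: "q \<in> Yset"
  shows "is_sup_in Yset p q (vector [max (p$1) (q$1), max (p$2) (q$2), max (p$3) (q$3)])"
proof -
  let ?z = "vector [max (p$1) (q$1), max (p$2) (q$2), max (p$3) (q$3)] :: real^3"
  have "max (p$3) (q$3) = 0 \<or> (p$1 = p$2 \<and> q$1 = q$2 \<and> p$1 \<le> p$3 \<and> q$1 \<le> q$3)"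
    using p q unfolding mem_Yset_iff by auto
  then have "?z \<in> Yset" using p q unfolding mem_Yset_iff by auto
  moreover have "p \<le> ?z" "q \<le> ?z" unfolding less_eq_vec3_iff by simp_all
  moreover have "?z \<le> w" if "p \<le> w" "q \<le> w" for w
    using that unfolding less_eq_vec3_iff by simp
  ultimately show ?thesis unfolding is_sup_in_def by auto
qed

lemma is_lattice_on_Yset: "is_lattice_on Yset"
  unfolding is_lattice_on_def using is_inf_in_Yset is_sup_in_Yset by blast

lemma meet_zero_e: "meet_in Yset (vector [0,0,0]) (vector [0,-1,0]) = vector [0,-1,0]"
  using is_inf_in_Yset[OF zero_mem_Yset e_mem_Yset] by (simp add: meet_in_eqI meet_Yset_def)

lemma meet_diagonal_e:
  assumes "0 < d" "d \<le> 1"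
  shows "meet_in Yset (d *\<^sub>R vector [-1,-1,-1]) (vector [0,-1,0]) = vector [-1,-1,-d]"
proof -
  from is_inf_in_Yset[OF diagonal_mem_Yset e_mem_Yset] assms
  have "meet_in Yset (d *\<^sub>R vector [-1,-1,-1]) (vector [0,-1,0])
        = meet_Yset (d *\<^sub>R vector [-1,-1,-1]) (vector [0,-1,0])"
    by (simp add: meet_in_eqI)
  also have "\<dots> = vector [-1,-1,-d]"
    using assms by (simp add: meet_Yset_def Let_def vec_eq_iff forall_3)
  finally show ?thesis .
qed

lemma meet_not_continuous:
  "\<not> continuous (at (vector [0,0,0], vector [0,-1,0]) within Yset \<times> Yset)
      (\<lambda>p. meet_in Yset (fst p) (snd p))"
proof
  let ?w = "vector [-1,-1,-1] :: real^3" and ?e = "vector [0,-1,0] :: real^3"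
  assume cont: "continuous (at (vector [0,0,0], ?e) within Yset \<times> Yset)
    (\<lambda>p. meet_in Yset (fst p) (snd p))"
  have in_Y: "eventually (\<lambda>d. (d *\<^sub>R ?w, ?e) \<in> Yset \<times> Yset) (at_right 0)"
    using eventually_at_right_zero_unit by eventually_elim (simp add: diagonal_mem_Yset e_mem_Yset)
  have lim: "((\<lambda>d. (d *\<^sub>R ?w, ?e)) \<longlongrightarrow> (vector [0,0,0], ?e)) (at_right 0)"
    by (intro tendsto_Pair tendsto_diagonal_zero tendsto_const)
  from continuous_within_tendsto_compose[OF cont in_Y lim]
  have "((\<lambda>d. meet_in Yset (d *\<^sub>R ?w) ?e) \<longlongrightarrow> ?e) (at_right 0)"
    by (simp add: meet_zero_e)
  then have "((\<lambda>d. meet_in Yset (d *\<^sub>R ?w) ?e $ 1) \<longlongrightarrow> ?e $ 1) (at_right 0)"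
    by (rule tendsto_vec_nth)
  moreover have "eventually (\<lambda>d. meet_in Yset (d *\<^sub>R ?w) ?e $ 1 = -1) (at_right (0::real))"
    using eventually_at_right_zero_unit by eventually_elim (simp add: meet_diagonal_e)
  ultimately have "((\<lambda>d. -1 :: real) \<longlongrightarrow> 0) (at_right (0::real))"
    using Lim_transform_eventually by fastforce
  then show False
    by (simp add: tendsto_const_iff)
qed

lemma not_top_meet_semilattice_Yset: "\<not> top_meet_semilattice Yset"
proof
  assume "top_meet_semilattice Yset"
  then have "continuous_on (Yset \<times> Yset) (\<lambda>p. meet_in Yset (fst p) (snd p))"
    unfolding top_meet_semilattice_def prod_topology_subtopology_eu by (simp add: case_prod_beta')
  moreover have "(vector [0,0,0], vector [0,-1,0]) \<in> Yset \<times> Yset"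
    using zero_mem_Yset e_mem_Yset by simp
  ultimately show False
    using meet_not_continuous continuous_on_eq_continuous_within by blast
qed

lemma openin_fell_topology_hit:
  assumes "openin (top_of_set Y) U"
  shows "openin (fell_topology Y) {A \<in> closed_subsets Y. A \<inter> U \<noteq> {}}"
  unfolding fell_topology_def openin_topology_generated_by_iff
  by (rule generate_topology_on.Basis) (use assms in blast)

lemma downset_diagonal_subset:
  assumes "0 < d"
  shows "downset Yset (d *\<^sub>R vector [-1,-1,-1]) \<subseteq> {u. u$1 = u$2}"
  using assms unfolding downset_def mem_Yset_iff less_eq_vec3_iff by auto

lemma ball_e_disjoint_plane: "ball (vector [0,-1,0]) (1/2) \<inter> {u :: real^3. u$1 = u$2} = {}"
proof -
  have "1/2 \<le> dist (vector [0,-1,0]) u" if "u$1 = u$2" for u :: "real^3"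
  proof -
    have "\<bar>(vector [0,-1,0] - u)$1\<bar> \<le> dist (vector [0,-1,0]) u"
         "\<bar>(vector [0,-1,0] - u)$2\<bar> \<le> dist (vector [0,-1,0]) u"
      unfolding dist_norm by (rule component_le_norm_cart)+
    then show ?thesis using that by simp
  qed
  then show ?thesis by fastforce
qed

lemma downset_not_continuous:
  "\<not> continuous_at_point (top_of_set Yset) (subtopology (fell_topology Yset) (down_sets Yset))
      (downset Yset) (vector [0,0,0])"
proof
  let ?w = "vector [-1,-1,-1] :: real^3"
  define H where "H = {A \<in> closed_subsets Yset. A \<inter> (Yset \<inter> ball (vector [0,-1,0]) (1/2)) \<noteq> {}}"
  have "openin (fell_topology Yset) H"
    unfolding H_def by (intro openin_fell_topology_hit openin_open_Int) auto
  then have H_open: "openin (subtopology (fell_topology Yset) (down_sets Yset)) (H \<inter> down_sets Yset)"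
    by (auto simp: openin_subtopology)
  have "vector [0,-1,0] \<in> Yset \<inter> ball (vector [0,-1,0]) (1/2)"
    by (simp add: e_mem_Yset)
  then have "downset Yset (vector [0,0,0]) \<in> H"
    unfolding H_def closed_subsets_def downset_Yset_zero by auto
  moreover have "downset Yset (vector [0,0,0]) \<in> down_sets Yset"
    unfolding down_sets_def using zero_mem_Yset by (rule imageI)
  ultimately have zero_in_H: "downset Yset (vector [0,0,0]) \<in> H \<inter> down_sets Yset" by blast
  assume "continuous_at_point (top_of_set Yset)
    (subtopology (fell_topology Yset) (down_sets Yset)) (downset Yset) (vector [0,0,0])"
  then obtain V where V: "openin (top_of_set Yset) V" "vector [0,0,0] \<in> V"
      "downset Yset ` V \<subseteq> H \<inter> down_sets Yset"
    using H_open zero_in_H unfolding continuous_at_point_def by blast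
  then obtain S where "open S" "V = Yset \<inter> S" by (meson openin_open)
  with V(2) have "eventually (\<lambda>d. d *\<^sub>R ?w \<in> S) (at_right 0)"
    using topological_tendstoD[OF tendsto_diagonal_zero] by blast
  with eventually_at_right_zero_unit have "eventually (\<lambda>d. 0 < d \<and> d *\<^sub>R ?w \<in> V) (at_right 0)"
    unfolding \<open>V = Yset \<inter> S\<close> by eventually_elim (simp add: diagonal_mem_Yset)
  then obtain d where "0 < d" "d *\<^sub>R ?w \<in> V"
    using eventually_happens'[OF trivial_limit_at_right_real] by blast
  with V(3) have "downset Yset (d *\<^sub>R ?w) \<inter> ball (vector [0,-1,0]) (1/2) \<noteq> {}"
    unfolding H_def by blast
  with downset_diagonal_subset[OF \<open>0 < d\<close>] ball_e_disjoint_plane show False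
    by blast
qed

theorem mainTheorem8:
  shows "(locally_compact_space (top_of_set Yset) \<and> order_connected Yset \<and> pospace Yset
          \<and> is_lattice_on Yset)
       \<and> (\<not> continuous (at (vector [0,0,0], vector [0,-1,0]) within Yset \<times> Yset)
              (\<lambda>p. meet_in Yset (fst p) (snd p))
          \<and> \<not> top_meet_semilattice Yset)
       \<and> \<not> continuous_at_point (top_of_set Yset) (subtopology (fell_topology Yset) (down_sets Yset))
              (downset Yset) (vector [0,0,0])"
  using locally_compact_Yset order_connected_Yset pospace_vec is_lattice_on_Yset
    meet_not_continuous not_top_meet_semilattice_Yset downset_not_continuous
  by blast

end
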